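(* Let $V$ be an $n$-dimensional vector space over a field $\mathbb{F}$, and let $k\leq n/2$. If $K$ and $L$ are nonzero subspaces of $\bigwedge^{k}V$ such that $x\wedge y=0$ for every $x\in K$ and $y\in L$, then \[ \dim K+\dim L\leq\binom{n}{k}-\binom{n-k}{k}+1. \]
   Context: $\bigwedge V$ denotes the exterior algebra of $V$ and $\bigwedge^{k}V$ its degree-$k$ component. Subspaces $K,L$ with $K\wedge L=0$ are called cross-annihilating. The paper assumes throughout, for expository purposes, that the characteristic of $\mathbb{F}$ is not $2$. *)

theory Defs
  imports Complex_Main "HOL-Library.Function_Algebras"
begin

text \<open>Concrete model of the exterior algebra of V = F^n with basis e_0,...,e_(n-1).
  An element of the exterior algebra is its coordinate function on the basis
  e_S = e_(s_1) wedge ... wedge e_(s_j) (s_1 < ... < s_j) indexed by finite sets S of indices.\<close>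

definition fscale :: "'a::field \<Rightarrow> ('b \<Rightarrow> 'a) \<Rightarrow> ('b \<Rightarrow> 'a)" where
  "fscale c f = (\<lambda>x. c * f x)"

lemma vector_space_fscale: "vector_space (fscale :: 'a::field \<Rightarrow> ('b \<Rightarrow> 'a) \<Rightarrow> _)"
  by (unfold_locales) (auto simp: fscale_def fun_eq_iff algebra_simps)

definition ext_power :: "nat \<Rightarrow> nat \<Rightarrow> (nat set \<Rightarrow> 'a::field) set" where
  "ext_power n k = {x. \<forall>S. x S \<noteq> 0 \<longrightarrow> S \<subseteq> {..<n} \<and> card S = k}"

text \<open>Sign of e_S wedge e_T = shuffle_sign S T * e_(S union T) for disjoint S, T.\<close>
definition shuffle_sign :: "nat set \<Rightarrow> nat set \<Rightarrow> 'a::field" where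
  "shuffle_sign S T = (-1) ^ card {(s, t). s \<in> S \<and> t \<in> T \<and> t < s}"

text \<open>Wedge product, extended bilinearly from e_S wedge e_T.\<close>
definition wedge :: "(nat set \<Rightarrow> 'a::field) \<Rightarrow> (nat set \<Rightarrow> 'a) \<Rightarrow> (nat set \<Rightarrow> 'a)" where
  "wedge x y = (\<lambda>U. \<Sum>S\<in>Pow U. shuffle_sign S (U - S) * x S * y (U - S))"

end

theory Submission
  imports Defs "HOL-Library.Nat_Bijection"
begin

text \<open>Order the basis sets colexicographically and send each nonzero \<open>x\<close> to its leading set,
  the largest \<open>k\<close>-set with a nonzero coefficient. If \<open>x \<and> y = 0\<close>, the leading sets of
  \<open>x\<close> and \<open>y\<close> must meet, since otherwise the coefficient of \<open>x \<and> y\<close> at their union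
  is, up to sign, the product of the two leading coefficients. A subspace has at least as many
  leading sets as its dimension, so the leading sets of \<open>K\<close> and \<open>L\<close> are nonempty
  cross-intersecting families of \<open>k\<close>-subsets of an \<open>n\<close>-set, and the bound is the
  corresponding bound for such families, proved by shifting and induction on \<open>n\<close>.\<close>

section \<open>Cross-intersecting families of \<open>k\<close>-sets\<close>

definition ksubsets :: "nat \<Rightarrow> nat \<Rightarrow> nat set set" where
  "ksubsets n k = {S. S \<subseteq> {..<n} \<and> card S = k}"

definition cross_intersecting :: "'a set set \<Rightarrow> 'a set set \<Rightarrow> bool" where
  "cross_intersecting A B \<longleftrightarrow> (\<forall>S\<in>A. \<forall>T\<in>B. S \<inter> T \<noteq> {})"

lemma finite_ksubsets: "finite (ksubsets n k)"
  by (rule finite_subset[of _ "Pow {..<n}"]) (auto simp: ksubsets_def)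

lemma card_ksubsets: "card (ksubsets n k) = n choose k"
  using n_subsets[of "{..<n}" k] by (simp add: ksubsets_def)

lemma ksubsets_0: "ksubsets n 0 = {{}}"
  by (auto simp: ksubsets_def card_eq_0_iff dest: finite_subset[OF _ finite_lessThan])

lemma finite_ksubsets_member: "S \<in> ksubsets n k \<Longrightarrow> finite S"
  by (auto simp: ksubsets_def dest: finite_subset[OF _ finite_lessThan])

lemma finite_ksubsets_family: "F \<subseteq> ksubsets n k \<Longrightarrow> finite F"
  using finite_ksubsets finite_subset by blast

lemma cross_intersecting_commute: "cross_intersecting A B \<longleftrightarrow> cross_intersecting B A"
  by (auto simp: cross_intersecting_def)

lemma cross_intersecting_mono:
  "cross_intersecting A B \<Longrightarrow> A' \<subseteq> A \<Longrightarrow> B' \<subseteq> B \<Longrightarrow> cross_intersecting A' B'"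
  by (auto simp: cross_intersecting_def)

lemma not_cross_intersecting_ksubsets_0:
  "A \<subseteq> ksubsets n 0 \<Longrightarrow> A \<noteq> {} \<Longrightarrow> B \<noteq> {} \<Longrightarrow> \<not> cross_intersecting A B"
  by (auto simp: ksubsets_0 cross_intersecting_def)

lemma card_ksubsets_meeting:
  assumes "T \<in> ksubsets m k"
  shows "card {S \<in> ksubsets m j. S \<inter> T \<noteq> {}} = (m choose j) - ((m - k) choose j)"
proof -
  have T: "T \<subseteq> {..<m}" "card T = k"
    using assms by (auto simp: ksubsets_def)
  have "m choose j = card ({S \<in> ksubsets m j. S \<inter> T \<noteq> {}} \<union> {S. S \<subseteq> {..<m} - T \<and> card S = j})"
    unfolding card_ksubsets[symmetric] by (rule arg_cong[where f = card]) (auto simp: ksubsets_def)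
  also have "\<dots> = card {S \<in> ksubsets m j. S \<inter> T \<noteq> {}} + card {S. S \<subseteq> {..<m} - T \<and> card S = j}"
    by (rule card_Un_disjoint) (auto simp: finite_ksubsets)
  also have "card {S. S \<subseteq> {..<m} - T \<and> card S = j} = (m - k) choose j"
    using n_subsets[of "{..<m} - T" j] T by (simp add: card_Diff_subset finite_subset)
  finally show ?thesis by simp
qed

text \<open>For \<open>n = 2k\<close> complementation maps \<open>A\<close> injectively into the \<open>k\<close>-sets outside \<open>B\<close>.\<close>
lemma cross_intersecting_card_half:
  assumes A: "A \<subseteq> ksubsets n k" and B: "B \<subseteq> ksubsets n k"
    and cross: "cross_intersecting A B" and n: "n = 2 * k"
  shows "card A + card B \<le> n choose k"
proof -
  let ?compl = "\<lambda>S. {..<n} - S"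
  have "inj_on ?compl A"
    using A by (intro inj_onI) (auto simp: ksubsets_def)
  then have "card A + card B = card (?compl ` A) + card B"
    by (simp add: card_image)
  also have "\<dots> = card (?compl ` A \<union> B)"
    using cross finite_ksubsets_family[OF A] finite_ksubsets_family[OF B]
    by (intro card_Un_disjoint[symmetric]) (auto simp: cross_intersecting_def)
  also have "\<dots> \<le> card (ksubsets n k)"
  proof (intro card_mono[OF finite_ksubsets] Un_least)
    show "?compl ` A \<subseteq> ksubsets n k"
      using A n by (auto simp: ksubsets_def card_Diff_subset finite_subset)
  qed (use B in auto)
  finally show ?thesis
    by (simp add: card_ksubsets)
qed

section \<open>Shifting\<close>

definition shift_set :: "'a \<Rightarrow> 'a \<Rightarrow> 'a set \<Rightarrow> 'a set" where
  "shift_set x y S = (if y \<in> S \<and> x \<notin> S then insert x (S - {y}) else S)"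

definition shift_family :: "'a \<Rightarrow> 'a \<Rightarrow> 'a set set \<Rightarrow> 'a set set" where
  "shift_family x y F =
     {S \<in> F. shift_set x y S \<in> F} \<union> shift_set x y ` {S \<in> F. shift_set x y S \<notin> F}"

definition shifted :: "nat \<Rightarrow> nat set set \<Rightarrow> bool" where
  "shifted m F \<longleftrightarrow> (\<forall>x<m. \<forall>S\<in>F. shift_set x m S \<in> F)"

lemma shift_set_moved:
  assumes "shift_set x y S \<noteq> S"
  shows "y \<in> S" "x \<notin> S" "shift_set x y S = insert x (S - {y})"
  using assms by (auto simp: shift_set_def split: if_splits)

lemma inj_on_shift_set: "inj_on (shift_set x y) {S. shift_set x y S \<noteq> S}"
proof (rule inj_onI)
  fix S T
  assume S_moved: "S \<in> {S. shift_set x y S \<noteq> S}" and T_moved: "T \<in> {S. shift_set x y S \<noteq> S}"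
    and eq: "shift_set x y S = shift_set x y T"
  have S: "y \<in> S" "x \<notin> S" "shift_set x y S = insert x (S - {y})"
    using shift_set_moved[of x y S] S_moved by simp_all
  have T: "y \<in> T" "x \<notin> T" "shift_set x y T = insert x (T - {y})"
    using shift_set_moved[of x y T] T_moved by simp_all
  have "S - {y} = insert x (S - {y}) - {x}"
    using S by auto
  also have "\<dots> = insert x (T - {y}) - {x}"
    using eq S T by simp
  also have "\<dots> = T - {y}"
    using T by auto
  finally show "S = T"
    using S T by blast
qed

lemma shift_set_ksubsets:
  assumes "S \<in> ksubsets n k" "x < n"
  shows "shift_set x y S \<in> ksubsets n k"
proof (cases "shift_set x y S = S")
  case False
  then have moved: "y \<in> S" "x \<notin> S" "shift_set x y S = insert x (S - {y})"
    by (rule shift_set_moved)+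
  moreover have "finite S"
    using assms(1) by (rule finite_ksubsets_member)
  ultimately have "card (shift_set x y S) = card S"
    by (simp add: card_Suc_Diff1 del: card_Diff_insert)
  then show ?thesis
    using assms moved by (auto simp: ksubsets_def)
qed (use assms in simp)

lemma mem_shift_family:
  "S' \<in> shift_family x y F \<longleftrightarrow>
     (S' \<in> F \<and> shift_set x y S' \<in> F) \<or> (\<exists>S\<in>F. shift_set x y S \<notin> F \<and> S' = shift_set x y S)"
  by (auto simp: shift_family_def)

lemma card_shift_family:
  assumes "finite F"
  shows "card (shift_family x y F) = card F"
proof -
  let ?kept = "{S \<in> F. shift_set x y S \<in> F}" and ?moved = "{S \<in> F. shift_set x y S \<notin> F}"
  have "inj_on (shift_set x y) ?moved"
    by (rule inj_on_subset[OF inj_on_shift_set]) auto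
  then have "card (shift_family x y F) = card ?kept + card ?moved"
    unfolding shift_family_def using assms by (subst card_Un_disjoint) (auto simp: card_image)
  also have "\<dots> = card (?kept \<union> ?moved)"
    using assms by (intro card_Un_disjoint[symmetric]) auto
  also have "?kept \<union> ?moved = F"
    by blast
  finally show ?thesis .
qed

lemma shift_family_ksubsets: "F \<subseteq> ksubsets n k \<Longrightarrow> x < n \<Longrightarrow> shift_family x y F \<subseteq> ksubsets n k"
  unfolding shift_family_def using shift_set_ksubsets by blast

lemma shift_set_meets:
  assumes "S \<inter> T \<noteq> {}" and "shift_set x y S \<inter> T \<noteq> {}"
  shows "S \<inter> shift_set x y T \<noteq> {}"
proof (cases "shift_set x y T = T")
  case False
  then have T: "y \<in> T" "x \<notin> T" "shift_set x y T = insert x (T - {y})"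
    by (rule shift_set_moved)+
  show ?thesis
  proof
    assume disjoint: "S \<inter> shift_set x y T = {}"
    then have "S \<inter> T = {y}" "x \<notin> S"
      using assms(1) T by auto
    then have "shift_set x y S \<inter> T = {}"
      using T(2) by (auto simp: shift_set_def)
    with assms(2) show False ..
  qed
qed (use assms in simp)

lemma shift_family_moved:
  assumes "S' \<in> shift_family x y F" and "\<not> (S' \<in> F \<and> shift_set x y S' \<in> F)"
  shows "x \<in> S'"
proof -
  obtain S where "S \<in> F" "shift_set x y S \<notin> F" "S' = shift_set x y S"
    using assms by (auto simp: mem_shift_family)
  then have "shift_set x y S \<noteq> S" and "S' = shift_set x y S"
    by auto
  then show ?thesis
    using shift_set_moved(3)[of x y S] by simp
qed

lemma shift_family_meets_kept:
  assumes cross: "cross_intersecting A B"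
    and S: "S \<in> A" "shift_set x y S \<in> A" and T': "T' \<in> shift_family x y B"
  shows "S \<inter> T' \<noteq> {}"
  using T' unfolding mem_shift_family
proof (elim disjE conjE bexE)
  assume "T' \<in> B"
  with cross S show ?thesis
    by (auto simp: cross_intersecting_def)
next
  fix T assume "T \<in> B" "T' = shift_set x y T"
  with cross S have "S \<inter> T \<noteq> {}" "shift_set x y S \<inter> T \<noteq> {}"
    by (auto simp: cross_intersecting_def)
  then show ?thesis
    unfolding \<open>T' = shift_set x y T\<close> by (rule shift_set_meets)
qed

lemma cross_intersecting_shift_family:
  assumes cross: "cross_intersecting A B"
  shows "cross_intersecting (shift_family x y A) (shift_family x y B)"
  unfolding cross_intersecting_def
proof (intro ballI)
  fix S' T' assume S': "S' \<in> shift_family x y A" and T': "T' \<in> shift_family x y B"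
  consider "S' \<in> A" "shift_set x y S' \<in> A" | "T' \<in> B" "shift_set x y T' \<in> B"
    | "x \<in> S'" "x \<in> T'"
    using shift_family_moved[OF S'] shift_family_moved[OF T'] by blast
  then show "S' \<inter> T' \<noteq> {}"
  proof cases
    case 1
    from cross this T' show ?thesis
      by (rule shift_family_meets_kept)
  next
    case 2
    with cross S' have "T' \<inter> S' \<noteq> {}"
      by (intro shift_family_meets_kept) (simp_all add: cross_intersecting_commute)
    then show ?thesis
      by blast
  qed blast
qed

lemma shift_family_containing_subset:
  "x \<noteq> y \<Longrightarrow> {S \<in> shift_family x y F. y \<in> S} \<subseteq> {S \<in> F. y \<in> S}"
  by (auto simp: shift_family_def shift_set_def)

lemma card_shift_family_containing_less:
  assumes "finite F" and "x \<noteq> y" and "S \<in> F" "shift_set x y S \<notin> F"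
  shows "card {S \<in> shift_family x y F. y \<in> S} < card {S \<in> F. y \<in> S}"
proof (rule psubset_card_mono)
  have "shift_set x y S \<noteq> S"
    using assms(3,4) by auto
  then have "y \<in> S"
    by (rule shift_set_moved)
  moreover have "S \<notin> shift_family x y F"
    using assms(2-4) \<open>y \<in> S\<close> by (auto simp: shift_family_def shift_set_def)
  ultimately show "{S \<in> shift_family x y F. y \<in> S} \<subset> {S \<in> F. y \<in> S}"
    using shift_family_containing_subset[OF assms(2)] assms(3) by blast
qed (use assms(1) in simp)

text \<open>A pair minimising the number of members containing \<open>m\<close> is shifted, because every
  effective shift lowers that number.\<close>
lemma obtain_shifted_cross_intersecting:
  assumes "A \<subseteq> ksubsets n k" "B \<subseteq> ksubsets n k" "cross_intersecting A B" "m \<le> n"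
  obtains A' B' where "A' \<subseteq> ksubsets n k" "B' \<subseteq> ksubsets n k" "cross_intersecting A' B'"
    "card A' = card A" "card B' = card B" "shifted m A'" "shifted m B'"
proof -
  define admissible where "admissible = (\<lambda>(A', B'). A' \<subseteq> ksubsets n k \<and> B' \<subseteq> ksubsets n k
      \<and> cross_intersecting A' B' \<and> card A' = card A \<and> card B' = card B)"
  define weight where "weight = (\<lambda>(A', B'). card {S \<in> A'. m \<in> S} + card {S \<in> B'. m \<in> S})"
  have "admissible (A, B)"
    using assms by (simp add: admissible_def)
  then obtain A' B' where adm: "admissible (A', B')"
    and least: "\<And>p. admissible p \<Longrightarrow> weight (A', B') \<le> weight p"
    using ex_has_least_nat[of admissible "(A, B)" weight] by auto
  have A': "A' \<subseteq> ksubsets n k" and B': "B' \<subseteq> ksubsets n k"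
    using adm by (auto simp: admissible_def)
  have finite: "finite A'" "finite B'"
    using A' B' by (auto intro: finite_ksubsets_family)
  have "shifted m A' \<and> shifted m B'"
  proof (rule ccontr)
    assume "\<not> (shifted m A' \<and> shifted m B')"
    then obtain x where x: "x < m" and unstable:
        "(\<exists>S\<in>A'. shift_set x m S \<notin> A') \<or> (\<exists>S\<in>B'. shift_set x m S \<notin> B')"
      by (auto simp: shifted_def)
    have "admissible (shift_family x m A', shift_family x m B')"
      using adm x \<open>m \<le> n\<close> finite
      by (auto simp: admissible_def shift_family_ksubsets card_shift_family
          cross_intersecting_shift_family)
    then have "weight (A', B') \<le> weight (shift_family x m A', shift_family x m B')"
      by (rule least)
    moreover have "weight (shift_family x m A', shift_family x m B') < weight (A', B')"
    proof -
      have "x \<noteq> m"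
        using x by simp
      then have le: "card {S \<in> shift_family x m F. m \<in> S} \<le> card {S \<in> F. m \<in> S}"
        if "finite F" for F :: "nat set set"
        using that shift_family_containing_subset[OF \<open>x \<noteq> m\<close>] by (intro card_mono) auto
      note less = card_shift_family_containing_less[OF _ \<open>x \<noteq> m\<close>]
      from unstable show ?thesis
      proof (elim disjE bexE)
        fix S assume "S \<in> A'" "shift_set x m S \<notin> A'"
        then show ?thesis
          using less[OF finite(1)] le[OF finite(2)] unfolding weight_def by fastforce
      next
        fix S assume "S \<in> B'" "shift_set x m S \<notin> B'"
        then show ?thesis
          using le[OF finite(1)] less[OF finite(2)] unfolding weight_def by fastforce
      qed
    qed
    ultimately show False
      by simp
  qed
  with adm that show ?thesis
    by (auto simp: admissible_def)
qed

definition avoiding :: "'a \<Rightarrow> 'a set set \<Rightarrow> 'a set set" where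
  "avoiding m F = {S \<in> F. m \<notin> S}"

definition link :: "'a \<Rightarrow> 'a set set \<Rightarrow> 'a set set" where
  "link m F = (\<lambda>S. S - {m}) ` {S \<in> F. m \<in> S}"

lemma card_avoiding_link:
  assumes "finite F"
  shows "card F = card (avoiding m F) + card (link m F)"
proof -
  have "inj_on (\<lambda>S. S - {m}) {S \<in> F. m \<in> S}"
    by (rule inj_onI) blast
  then have "card (link m F) = card {S \<in> F. m \<in> S}"
    by (simp add: link_def card_image)
  moreover have "card F = card (avoiding m F) + card {S \<in> F. m \<in> S}"
    using assms unfolding avoiding_def
    by (subst card_Un_disjoint[symmetric]) (auto intro: arg_cong[where f = card])
  ultimately show ?thesis
    by simp
qed

lemma avoiding_ksubsets: "F \<subseteq> ksubsets (Suc m) k \<Longrightarrow> avoiding m F \<subseteq> ksubsets m k"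
  by (auto simp: avoiding_def ksubsets_def subset_iff less_Suc_eq)

lemma link_ksubsets: "F \<subseteq> ksubsets (Suc m) k \<Longrightarrow> link m F \<subseteq> ksubsets m (k - 1)"
  by (auto simp: link_def ksubsets_def subset_iff less_Suc_eq dest: finite_subset[OF _ finite_lessThan])

lemma cross_intersecting_avoiding:
  "cross_intersecting A B \<Longrightarrow> cross_intersecting (avoiding m A) (avoiding m B)"
  by (rule cross_intersecting_mono) (auto simp: avoiding_def)

lemma ex_less_notin:
  assumes "A \<subseteq> {..<m}" "card A < m"
  shows "\<exists>x<m. x \<notin> A"
proof (rule ccontr)
  assume "\<not> (\<exists>x<m. x \<notin> A)"
  then have "A = {..<m}"
    using assms(1) by auto
  with assms(2) show False
    by simp
qed

lemma avoiding_nonempty_if_shifted: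
  assumes F: "F \<subseteq> ksubsets (Suc m) k" "F \<noteq> {}" "shifted m F" and "k \<le> m"
  shows "avoiding m F \<noteq> {}"
proof -
  obtain S where S: "S \<in> F"
    using F(2) by blast
  show ?thesis
  proof (cases "m \<in> S")
    case True
    have "S - {m} \<subseteq> {..<m}"
      using link_ksubsets[OF F(1)] S True by (auto simp: link_def ksubsets_def)
    moreover have "card (S - {m}) < m"
      using F(1) S True \<open>k \<le> m\<close> card_Diff1_less[OF finite_ksubsets_member, of S "Suc m" k m]
      by (auto simp: ksubsets_def)
    ultimately obtain x where x: "x < m" "x \<notin> S - {m}"
      using ex_less_notin by blast
    with True have "shift_set x m S = insert x (S - {m})"
      by (auto simp: shift_set_def)
    moreover have "shift_set x m S \<in> F"
      using F(3) S x(1) by (auto simp: shifted_def)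
    ultimately show ?thesis
      using x by (auto simp: avoiding_def)
  qed (use S in \<open>auto simp: avoiding_def\<close>)
qed

lemma card_link_le_meeting:
  assumes A: "A \<subseteq> ksubsets (Suc m) k" and B: "B \<subseteq> ksubsets (Suc m) k"
    and cross: "cross_intersecting A B" and "avoiding m B \<noteq> {}"
  shows "card (link m A) \<le> (m choose (k - 1)) - ((m - k) choose (k - 1))"
proof -
  obtain T where T: "T \<in> avoiding m B"
    using assms(4) by blast
  have "link m A \<subseteq> {S \<in> ksubsets m (k - 1). S \<inter> T \<noteq> {}}"
    using link_ksubsets[OF A] cross T by (auto simp: link_def avoiding_def cross_intersecting_def)
  then have "card (link m A) \<le> card {S \<in> ksubsets m (k - 1). S \<inter> T \<noteq> {}}"
    by (intro card_mono) (auto intro: finite_ksubsets_family)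
  also have "\<dots> = (m choose (k - 1)) - ((m - k) choose (k - 1))"
    using avoiding_ksubsets[OF B] T by (intro card_ksubsets_meeting) auto
  finally show ?thesis .
qed

text \<open>Since \<open>2 * (k - 1) < m\<close>, two members of the links miss a common point \<open>x < m\<close>;
  shifting the member of \<open>B\<close> from \<open>m\<close> to \<open>x\<close> then forces the intersection.\<close>
lemma cross_intersecting_link:
  assumes A: "A \<subseteq> ksubsets (Suc m) k" and B: "B \<subseteq> ksubsets (Suc m) k"
    and "shifted m B" and cross: "cross_intersecting A B" and "0 < k" "2 * k \<le> Suc m"
  shows "cross_intersecting (link m A) (link m B)"
  unfolding cross_intersecting_def
proof (intro ballI notI)
  fix S' T' assume "S' \<in> link m A" "T' \<in> link m B" and disjoint: "S' \<inter> T' = {}"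
  then obtain S T where S: "S \<in> A" "m \<in> S" "S' = S - {m}" and T: "T \<in> B" "m \<in> T" "T' = T - {m}"
    by (auto simp: link_def)
  have "S' \<in> ksubsets m (k - 1)" "T' \<in> ksubsets m (k - 1)"
    using link_ksubsets[OF A] link_ksubsets[OF B] \<open>S' \<in> link m A\<close> \<open>T' \<in> link m B\<close> by auto
  then have "S' \<union> T' \<subseteq> {..<m}" "card (S' \<union> T') < m"
    using card_Un_le[of S' T'] assms(5,6) by (auto simp: ksubsets_def)
  then obtain x where x: "x < m" "x \<notin> S' \<union> T'"
    using ex_less_notin by blast
  then have "shift_set x m T = insert x T'"
    using T by (auto simp: shift_set_def)
  moreover have "shift_set x m T \<in> B"
    using \<open>shifted m B\<close> T x by (auto simp: shifted_def)
  ultimately have "insert x T' \<in> B"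
    by simp
  then have "S \<inter> insert x T' \<noteq> {}"
    using cross S(1) unfolding cross_intersecting_def by blast
  then show False
    using S T x disjoint by auto
qed

lemma binomial_diff_Suc:
  assumes "0 < k" "k \<le> m"
  shows "(Suc m choose k) - ((Suc m - k) choose k)
    = ((m choose k) - ((m - k) choose k)) + ((m choose (k - 1)) - ((m - k) choose (k - 1)))"
proof -
  obtain j where k: "k = Suc j"
    using assms(1) by (cases k) auto
  have "Suc m - k = Suc (m - k)"
    using assms(2) by simp
  moreover have "(m - k) choose j \<le> m choose j" "(m - k) choose k \<le> m choose k"
    by (simp_all add: binomial_right_mono)
  ultimately show ?thesis
    unfolding k by (simp add: ac_simps)
qed

lemma binomial_link_bound:
  assumes "1 < k" "2 * k \<le> Suc m"
  shows "(m choose (k - 1)) - ((m - (k - 1)) choose (k - 1)) + 1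
    \<le> (m choose (k - 1)) - ((m - k) choose (k - 1))"
proof -
  obtain i where k: "k = Suc (Suc i)"
    using assms(1) by (auto dest: less_imp_Suc_add)
  have "m - (k - 1) = Suc (m - k)"
    using assms by (simp add: k)
  then have "(m - (k - 1)) choose (k - 1) = ((m - k) choose i) + ((m - k) choose (k - 1))"
    by (simp add: k)
  moreover have "0 < (m - k) choose i"
    using assms by (intro zero_less_binomial) (simp add: k)
  moreover have "(m - (k - 1)) choose (k - 1) \<le> m choose (k - 1)"
    by (intro binomial_right_mono) simp
  ultimately show ?thesis
    by linarith
qed

text \<open>Hypothesis \<open>bound\<close> is the induction hypothesis for \<open>k - 1\<close> sets; it is needed only when
  both links are nonempty. Otherwise one link is empty and the other consists of sets meeting a
  fixed member of the other family that avoids \<open>m\<close>.\<close>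
lemma card_links_le:
  assumes A: "A \<subseteq> ksubsets (Suc m) k" and B: "B \<subseteq> ksubsets (Suc m) k"
    and "shifted m B" and cross: "cross_intersecting A B"
    and avoiding: "avoiding m A \<noteq> {}" "avoiding m B \<noteq> {}" and "0 < k" "2 * k \<le> m"
    and bound: "\<And>A' B'. A' \<subseteq> ksubsets m (k - 1) \<Longrightarrow> B' \<subseteq> ksubsets m (k - 1) \<Longrightarrow>
      A' \<noteq> {} \<Longrightarrow> B' \<noteq> {} \<Longrightarrow> cross_intersecting A' B' \<Longrightarrow>
      card A' + card B' \<le> (m choose (k - 1)) - ((m - (k - 1)) choose (k - 1)) + 1"
  shows "card (link m A) + card (link m B) \<le> (m choose (k - 1)) - ((m - k) choose (k - 1))"
proof (cases "link m A = {} \<or> link m B = {}")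
  case True
  have "cross_intersecting B A"
    using cross by (simp add: cross_intersecting_commute)
  with True show ?thesis
    using card_link_le_meeting[OF A B cross avoiding(2)] card_link_le_meeting[OF B A _ avoiding(1)]
    by auto
next
  case False
  have cross_link: "cross_intersecting (link m A) (link m B)"
    using cross_intersecting_link[OF A B \<open>shifted m B\<close> cross \<open>0 < k\<close>] \<open>2 * k \<le> m\<close> by simp
  have "k - 1 \<noteq> 0"
  proof
    assume "k - 1 = 0"
    then have "\<not> cross_intersecting (link m A) (link m B)"
      using False link_ksubsets[OF A] by (intro not_cross_intersecting_ksubsets_0) auto
    with cross_link show False
      by simp
  qed
  have "card (link m A) + card (link m B) \<le> (m choose (k - 1)) - ((m - (k - 1)) choose (k - 1)) + 1"
    using bound[OF link_ksubsets[OF A] link_ksubsets[OF B] _ _ cross_link] False by auto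
  also have "\<dots> \<le> (m choose (k - 1)) - ((m - k) choose (k - 1))"
    using \<open>k - 1 \<noteq> 0\<close> \<open>2 * k \<le> m\<close> by (intro binomial_link_bound) auto
  finally show ?thesis .
qed

text \<open>Induction on \<open>n = m + 1\<close>: after shifting towards \<open>m\<close>, the members avoiding \<open>m\<close>
  form an instance for \<open>(m, k)\<close>, the links at \<open>m\<close> are bounded by \<open>card_links_le\<close>,
  and Pascal's rule adds up the two bounds.\<close>
theorem cross_intersecting_card_le:
  assumes "A \<subseteq> ksubsets n k" "B \<subseteq> ksubsets n k" "A \<noteq> {}" "B \<noteq> {}"
    "cross_intersecting A B" "2 * k \<le> n"
  shows "card A + card B \<le> (n choose k) - ((n - k) choose k) + 1"
  using assms
proof (induction n arbitrary: k A B)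
  case 0
  then show ?case
    using not_cross_intersecting_ksubsets_0 by auto
next
  case (Suc m)
  consider "k = 0" | "2 * k = Suc m" | "0 < k" "2 * k \<le> m"
    using Suc.prems(6) by linarith
  then show ?case
  proof cases
    case 1
    with Suc.prems show ?thesis
      using not_cross_intersecting_ksubsets_0 by blast
  next
    case 2
    then have "Suc m - k = k"
      by simp
    with 2 show ?thesis
      using cross_intersecting_card_half[OF Suc.prems(1,2,5)] by simp
  next
    case 3
    obtain A' B' where A': "A' \<subseteq> ksubsets (Suc m) k" and B': "B' \<subseteq> ksubsets (Suc m) k"
      and cross: "cross_intersecting A' B'" and card: "card A' = card A" "card B' = card B"
      and shifted: "shifted m A'" "shifted m B'"
      using obtain_shifted_cross_intersecting[OF Suc.prems(1,2,5), of m] by auto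
    have finite: "finite A'" "finite B'"
      using A' B' by (auto intro: finite_ksubsets_family)
    have "card A \<noteq> 0" "card B \<noteq> 0"
      using Suc.prems(1-4) by (auto dest: finite_ksubsets_family)
    then have "A' \<noteq> {}" "B' \<noteq> {}"
      using card by auto
    then have avoiding: "avoiding m A' \<noteq> {}" "avoiding m B' \<noteq> {}"
      using avoiding_nonempty_if_shifted A' B' shifted 3 by auto
    have avoiding_bound:
      "card (avoiding m A') + card (avoiding m B') \<le> (m choose k) - ((m - k) choose k) + 1"
      using Suc.IH[OF avoiding_ksubsets[OF A'] avoiding_ksubsets[OF B'] avoiding
          cross_intersecting_avoiding[OF cross] 3(2)] .
    have link_bound:
      "card (link m A') + card (link m B') \<le> (m choose (k - 1)) - ((m - k) choose (k - 1))"
      using card_links_le[OF A' B' shifted(2) cross avoiding 3] Suc.IH[where k = "k - 1"] 3 by simp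
    have "card A + card B
        = (card (avoiding m A') + card (avoiding m B')) + (card (link m A') + card (link m B'))"
      using card card_avoiding_link[OF finite(1), of m] card_avoiding_link[OF finite(2), of m] by simp
    also have "\<dots> \<le> (Suc m choose k) - ((Suc m - k) choose k) + 1"
      using avoiding_bound link_bound binomial_diff_Suc[of k m] 3 by simp
    finally show ?thesis .
  qed
qed

section \<open>Leading sets in the exterior power\<close>

text \<open>The colexicographic order on finite sets of indices is the order of their binary
  encodings \<open>set_encode S = (\<Sum>i\<in>S. 2 ^ i)\<close>.\<close>
definition leading_set :: "(nat set \<Rightarrow> 'a::zero) \<Rightarrow> nat set" where
  "leading_set x = set_decode (Max (set_encode ` {S. x S \<noteq> 0}))"

lemma
  assumes "x \<in> ext_power n k" and "x \<noteq> 0"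
  shows leading_set_nonzero: "x (leading_set x) \<noteq> 0"
    and leading_set_ksubsets: "leading_set x \<in> ksubsets n k"
    and set_encode_le_leading_set: "x S \<noteq> 0 \<Longrightarrow> set_encode S \<le> set_encode (leading_set x)"
proof -
  let ?supp = "{S. x S \<noteq> 0}"
  have supp: "?supp \<subseteq> ksubsets n k"
    using assms(1) by (auto simp: ext_power_def ksubsets_def)
  then have "finite ?supp"
    by (rule finite_ksubsets_family)
  moreover have "?supp \<noteq> {}"
    using assms(2) by auto
  ultimately have "Max (set_encode ` ?supp) \<in> set_encode ` ?supp"
    by (intro Max_in) auto
  then obtain S0 where S0: "x S0 \<noteq> 0" "set_encode S0 = Max (set_encode ` ?supp)"
    by auto
  moreover have "finite S0"
    using S0(1) supp finite_ksubsets_member by blast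
  ultimately have lead: "leading_set x = S0"
    unfolding leading_set_def S0(2)[symmetric] by simp
  show "x (leading_set x) \<noteq> 0" "leading_set x \<in> ksubsets n k"
    using lead S0(1) supp by auto
  show "x S \<noteq> 0 \<Longrightarrow> set_encode S \<le> set_encode (leading_set x)"
    using lead S0(2) \<open>finite ?supp\<close> by simp
qed

lemma set_encode_Un_disjoint:
  "finite S \<Longrightarrow> finite T \<Longrightarrow> S \<inter> T = {} \<Longrightarrow> set_encode (S \<union> T) = set_encode S + set_encode T"
  unfolding set_encode_def by (rule sum.union_disjoint)

text \<open>Since \<open>set_encode\<close> is additive on disjoint sets, at \<open>U = leading_set x \<union> leading_set y\<close>
  every splitting \<open>U = S \<union> (U - S)\<close> other than the leading one has a vanishing coefficient.\<close>
lemma wedge_nonzero_if_leading_sets_disjoint: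
  assumes x: "x \<in> ext_power n k" "x \<noteq> 0" and y: "y \<in> ext_power n l" "y \<noteq> 0"
    and disjoint: "leading_set x \<inter> leading_set y = {}"
  shows "wedge x y \<noteq> 0"
proof -
  define S0 T0 where "S0 = leading_set x" and "T0 = leading_set y"
  define U where "U = S0 \<union> T0"
  have finite: "finite S0" "finite T0" "finite U"
    using leading_set_ksubsets[OF x] leading_set_ksubsets[OF y]
    by (auto simp: S0_def T0_def U_def intro: finite_ksubsets_member)
  have encode_U: "set_encode U = set_encode S0 + set_encode T0"
    using finite disjoint by (simp add: U_def S0_def T0_def set_encode_Un_disjoint)
  have U_S0: "U - S0 = T0"
    using disjoint by (auto simp: U_def S0_def T0_def)
  define summand where "summand = (\<lambda>S. shuffle_sign S (U - S) * x S * y (U - S))"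
  have "summand S = 0" if S: "S \<in> Pow U - {S0}" for S
  proof (rule ccontr)
    assume "summand S \<noteq> 0"
    then have "set_encode S \<le> set_encode S0" "set_encode (U - S) \<le> set_encode T0"
      using set_encode_le_leading_set[OF x] set_encode_le_leading_set[OF y]
      by (auto simp: summand_def S0_def T0_def)
    moreover have "set_encode U = set_encode S + set_encode (U - S)"
      using S finite(3) set_encode_Un_disjoint[of S "U - S"] finite_subset[of S U]
      by (simp add: Un_absorb1)
    ultimately have "set_encode S = set_encode S0"
      using encode_U by linarith
    then show False
      using S finite set_encode_eq[of S S0] finite_subset[of S U] by auto
  qed
  then have "wedge x y U = summand S0"
    unfolding wedge_def summand_def[symmetric] using finite(3)
    by (subst sum.remove[of _ S0]) (auto simp: U_def)
  also have "\<dots> = shuffle_sign S0 T0 * x S0 * y T0"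
    by (simp add: summand_def U_S0)
  also have "\<dots> \<noteq> 0"
    using leading_set_nonzero[OF x] leading_set_nonzero[OF y]
    by (simp add: shuffle_sign_def S0_def T0_def)
  finally show ?thesis
    by auto
qed

lemma sum_apply: "sum f A x = (\<Sum>a\<in>A. f a x)"
  by (induction A rule: infinite_finite_induct) auto

lemma eq_if_agree_on_leading_sets:
  assumes K: "module.subspace fscale K" "K \<subseteq> ext_power n k" and "x \<in> K" "y \<in> K"
    and agree: "\<forall>S \<in> leading_set ` (K - {0}). x S = y S"
  shows "x = y"
proof (rule ccontr)
  interpret vector_space "fscale :: 'a::field \<Rightarrow> (nat set \<Rightarrow> 'a) \<Rightarrow> _"
    by (rule vector_space_fscale)
  assume "x \<noteq> y"
  then have "x - y \<in> K - {0}"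
    using subspace_diff[OF K(1) \<open>x \<in> K\<close> \<open>y \<in> K\<close>] by simp
  then have "(x - y) (leading_set (x - y)) \<noteq> 0" and "x (leading_set (x - y)) = y (leading_set (x - y))"
    using leading_set_nonzero[of "x - y" n k] K(2) agree by auto
  then show False
    by simp
qed

lemma dim_le_card_leading_sets:
  fixes K :: "(nat set \<Rightarrow> 'a::field) set"
  assumes K: "module.subspace fscale K" "K \<subseteq> ext_power n k"
  shows "vector_space.dim fscale K \<le> card (leading_set ` (K - {0}))"
proof -
  interpret V: vector_space "fscale :: 'a \<Rightarrow> (nat set \<Rightarrow> 'a) \<Rightarrow> _"
    by (rule vector_space_fscale)
  define A where "A = leading_set ` (K - {0})"
  have "A \<subseteq> ksubsets n k"
    using K(2) leading_set_ksubsets by (auto simp: A_def)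
  then have "finite A"
    by (rule finite_ksubsets_family)
  define restrict where "restrict = (\<lambda>x::nat set \<Rightarrow> 'a. \<lambda>S. if S \<in> A then x S else 0)"
  define e where "e = (\<lambda>(S::nat set) T. if T = S then 1 else 0 :: 'a)"
  interpret restrict: Vector_Spaces.linear fscale fscale restrict
    by (auto simp: Vector_Spaces.linear_iff restrict_def fscale_def fun_eq_iff vector_space_fscale)
  obtain B where B: "B \<subseteq> K" "V.independent B" "K \<subseteq> V.span B" "card B = V.dim K"
    using V.basis_exists by blast
  have "inj_on restrict K"
    using eq_if_agree_on_leading_sets[OF K]
    by (intro inj_onI) (metis A_def restrict_def)
  then have "V.independent (restrict ` B)"
    using B(1,2) V.span_minimal[OF B(1) K(1)]
    by (intro restrict.independent_injective_image) (auto intro: inj_on_subset)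
  moreover have "restrict ` B \<subseteq> V.span (e ` A)"
  proof
    fix v assume "v \<in> restrict ` B"
    then obtain x where "v = restrict x"
      by blast
    then have "v = (\<Sum>S\<in>A. fscale (x S) (e S))"
      using \<open>finite A\<close> by (auto simp: sum_apply fscale_def restrict_def e_def fun_eq_iff if_distrib cong: if_cong)
    also have "\<dots> \<in> V.span (e ` A)"
      by (intro V.span_sum V.span_scale V.span_base) auto
    finally show "v \<in> V.span (e ` A)" .
  qed
  ultimately have "card (restrict ` B) \<le> card (e ` A)"
    using V.independent_span_bound \<open>finite A\<close> by blast
  also have "\<dots> \<le> card A"
    using \<open>finite A\<close> by (rule card_image_le)
  finally show ?thesis
    using card_image[OF inj_on_subset[OF \<open>inj_on restrict K\<close> B(1)]] B(4) by (simp add: A_def)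
qed

theorem theorem1p7:
  fixes n k :: nat
    and K L :: "(nat set \<Rightarrow> 'a::field) set"
  assumes char: "(2::'a) \<noteq> 0"
    and kn: "2 * k \<le> n"
    and K_sub: "K \<subseteq> ext_power n k" and K_subspace: "module.subspace fscale K"
    and L_sub: "L \<subseteq> ext_power n k" and L_subspace: "module.subspace fscale L"
    and K_nz: "K \<noteq> {0}" and L_nz: "L \<noteq> {0}"
    and cross: "\<forall>x\<in>K. \<forall>y\<in>L. wedge x y = 0"
  shows "vector_space.dim fscale K + vector_space.dim fscale L
           \<le> (n choose k) - ((n - k) choose k) + 1"
proof -
  interpret V: vector_space "fscale :: 'a \<Rightarrow> (nat set \<Rightarrow> 'a) \<Rightarrow> _"
    by (rule vector_space_fscale)
  define A B where "A = leading_set ` (K - {0})" and "B = leading_set ` (L - {0})"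
  have "A \<subseteq> ksubsets n k" "B \<subseteq> ksubsets n k"
    unfolding A_def B_def using K_sub L_sub by (auto intro!: leading_set_ksubsets)
  moreover have "A \<noteq> {}" "B \<noteq> {}"
    using K_nz L_nz V.subspace_0[OF K_subspace] V.subspace_0[OF L_subspace] by (auto simp: A_def B_def)
  moreover have "cross_intersecting A B"
    unfolding cross_intersecting_def A_def B_def
  proof (intro ballI, elim imageE)
    fix S T x y assume "x \<in> K - {0}" "y \<in> L - {0}" "S = leading_set x" "T = leading_set y"
    then show "S \<inter> T \<noteq> {}"
      using cross K_sub L_sub wedge_nonzero_if_leading_sets_disjoint[of x n k y k] by blast
  qed
  ultimately have "card A + card B \<le> (n choose k) - ((n - k) choose k) + 1"
    using kn by (rule cross_intersecting_card_le)
  moreover have "V.dim K \<le> card A" "V.dim L \<le> card B"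
    unfolding A_def B_def
    using dim_le_card_leading_sets[OF K_subspace K_sub] dim_le_card_leading_sets[OF L_subspace L_sub]
    by simp_all
  ultimately show ?thesis
    by linarith
qed

end
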